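(* Let $c$ be the minimum value such that $\Pr_\tau[S]\le c\,|S|$ for all intervals $S\subseteq[0,1]$ with $|S|\ge2\rho$. For any budget $K\le M$, run the LEA algorithm with $\gamma=\sqrt{V_{\mathcal U^*}/(8cM)}$ (so $\rho=\gamma\sqrt\epsilon$). Then it outputs a $(1-\epsilon,\delta)$-optimal allocation using $O\big(M\ln(2M/\delta)/\rho^2\big)$ samples.
   Context: A population is partitioned into $M$ units $u\in\{1,\dots,M\}$ with unknown treatment effects $\tau(u)\in[0,1]$, pairwise distinct. $\Pr_\tau[S]=|\{u:\tau(u)\in S\}|/M$. For budget $K\in\{1,\dots,M\}$, $\mathcal U^*$ is the set of the $K$ units with largest $\tau(u)$ and $V_{\mathcal U^*}=\sum_{u\in\mathcal U^*}\tau(u)$; an allocation $S$ of $K$ units is $(1-\epsilon,\delta)$-optimal if $\sum_{u\in S}\tau(u)\ge(1-\epsilon)V_{\mathcal U^*}$ with probability at least $1-\delta$. An estimation oracle, given $u$ and $\epsilon',\delta'$, returns $\hat\tau(u)$ with $|\hat\tau(u)-\tau(u)|\le\epsilon'$ with probability $\ge1-\delta'$ using $O(\ln(2/\delta')/\epsilon'^2)$ samples. The LEA algorithm: on input $M$ units, budget $K$, parameters $\epsilon,\delta,\gamma>0$, set $\rho=\gamma\sqrt\epsilon$, obtain for each unit $u$ a $(\rho,\delta/M)$-accurate estimate $\hat\tau(u)$ from the oracle, and output the $K$ units with the largest $\hat\tau(u)$. *)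

theory Defs
  imports "HOL-Probability.Probability"
begin

definition Pr_tau :: "'u set \<Rightarrow> ('u \<Rightarrow> real) \<Rightarrow> real set \<Rightarrow> real" where
  "Pr_tau U f S = real (card {u \<in> U. f u \<in> S}) / real (card U)"

definition is_top_K :: "('u \<Rightarrow> real) \<Rightarrow> 'u set \<Rightarrow> nat \<Rightarrow> 'u set \<Rightarrow> bool" where
  "is_top_K f U K S \<longleftrightarrow> S \<subseteq> U \<and> card S = K \<and> (\<forall>u\<in>S. \<forall>v\<in>U - S. f v \<le> f u)"

text \<open>c is admissible if Pr_tau[S] \<le> c |S| for all intervals S \<subseteq> [0,1] with |S| \<ge> 2 rho.
  (Closed intervals suffice: every interval is contained in the closed interval of equal length.)\<close>
definition interval_bound :: "'u set \<Rightarrow> ('u \<Rightarrow> real) \<Rightarrow> real \<Rightarrow> real \<Rightarrow> bool" where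
  "interval_bound U f \<rho> c \<longleftrightarrow>
     (\<forall>a b. 0 \<le> a \<and> a \<le> b \<and> b \<le> 1 \<and> b - a \<ge> 2 * \<rho> \<longrightarrow> Pr_tau U f {a..b} \<le> c * (b - a))"

end

theory Submission
  imports Defs
begin

text \<open>If every estimate is within \<open>\<rho>\<close> of the true effect, a unit of the true top-\<open>K\<close> set
  that the algorithm drops and a unit it picks instead have true effects at most \<open>2\<rho>\<close> apart.
  Hence all misranked units have effects in one interval of length \<open>2\<rho>\<close>, which contains at
  most \<open>2c\<rho>M\<close> units, and each of the at most \<open>c\<rho>M\<close> exchanges loses at most \<open>2\<rho>\<close>.  The total
  loss \<open>2cM\<rho>\<^sup>2\<close> equals \<open>\<epsilon>V/4\<close> for the chosen \<open>\<gamma>\<close>; a union bound over the \<open>M\<close> estimates gives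
  the probability.\<close>

lemma top_K_card_diff_eq:
  assumes "finite U" "is_top_K f U K S" "is_top_K g U K T"
  shows "card (S - T) = card (T - S)"
proof -
  have fin: "finite S" "finite T"
    using assms finite_subset unfolding is_top_K_def by blast+
  have "card (S - T) = K - card (S \<inter> T)" "card (T - S) = K - card (S \<inter> T)"
    using assms(2,3) card_Diff_subset_Int[of S T] card_Diff_subset_Int[of T S] fin
    unfolding is_top_K_def by (simp_all add: Int_commute)
  then show ?thesis by simp
qed

lemma top_K_misranked_close:
  assumes S: "is_top_K f U K S" and T: "is_top_K g U K T"
    and acc: "\<forall>w\<in>U. \<bar>g w - f w\<bar> \<le> \<rho>"
    and u: "u \<in> S - T" and v: "v \<in> T - S"
  shows "f v \<le> f u" "f u \<le> f v + 2 * \<rho>"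
proof -
  have "u \<in> U" "v \<in> U" using S T u v unfolding is_top_K_def by auto
  then have "g u \<le> g v" "\<bar>g u - f u\<bar> \<le> \<rho>" "\<bar>g v - f v\<bar> \<le> \<rho>"
    using T u v acc unfolding is_top_K_def by auto
  then show "f u \<le> f v + 2 * \<rho>" by linarith
  show "f v \<le> f u" using S u v \<open>v \<in> U\<close> unfolding is_top_K_def by auto
qed

lemma top_K_symdiff_in_interval:
  assumes "finite U" and S: "is_top_K f U K S" and T: "is_top_K g U K T"
    and acc: "\<forall>w\<in>U. \<bar>g w - f w\<bar> \<le> \<rho>"
  obtains x where "\<forall>u \<in> (S - T) \<union> (T - S). x \<le> f u \<and> f u \<le> x + 2 * \<rho>"
proof (cases "T - S = {}")
  case True
  moreover have "finite (S - T)" using S \<open>finite U\<close> finite_subset unfolding is_top_K_def by blast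
  ultimately have "S - T = {}" using top_K_card_diff_eq[OF assms(1-3)] by (metis card_0_eq card.empty)
  with True show ?thesis using that by simp
next
  case False
  have fin: "finite (T - S)" using T \<open>finite U\<close> finite_subset unfolding is_top_K_def by blast
  define x where "x = Min (f ` (T - S))"
  have "x \<in> f ` (T - S)" using Min_in fin False unfolding x_def by blast
  then obtain v where v: "v \<in> T - S" "f v = x" by blast
  have "card (S - T) \<noteq> 0" using False fin top_K_card_diff_eq[OF assms(1-3)] by simp
  then obtain u' where u': "u' \<in> S - T" by (metis card.empty ex_in_conv)
  have close_S: "x \<le> f u \<and> f u \<le> x + 2 * \<rho>" if "u \<in> S - T" for u
    using top_K_misranked_close[OF S T acc that v(1)] v(2) by simp
  have "x \<le> f w \<and> f w \<le> x + 2 * \<rho>" if "w \<in> T - S" for w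
  proof
    show "x \<le> f w" unfolding x_def using Min_le[OF finite_imageI[OF fin] imageI[OF that]] .
    show "f w \<le> x + 2 * \<rho>"
      using top_K_misranked_close(1)[OF S T acc u' that] close_S[OF u'] by linarith
  qed
  with close_S show ?thesis using that by blast
qed

lemma top_K_sum_diff_le:
  assumes "finite U" and S: "is_top_K f U K S" and T: "is_top_K g U K T"
    and acc: "\<forall>w\<in>U. \<bar>g w - f w\<bar> \<le> \<rho>"
  shows "sum f S - sum f T \<le> 2 * \<rho> * real (card (S - T))"
proof -
  obtain x where x: "\<forall>u \<in> (S - T) \<union> (T - S). x \<le> f u \<and> f u \<le> x + 2 * \<rho>"
    using top_K_symdiff_in_interval[OF assms] .
  have fin: "finite S" "finite T"
    using S T \<open>finite U\<close> unfolding is_top_K_def by (auto intro: finite_subset)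
  have "sum f S = sum f (S \<inter> T) + sum f (S - T)" by (rule sum.Int_Diff[OF fin(1)])
  moreover have "sum f T = sum f (S \<inter> T) + sum f (T - S)"
    using sum.Int_Diff[OF fin(2), of f S] by (simp add: Int_commute)
  ultimately have "sum f S - sum f T = sum f (S - T) - sum f (T - S)" by simp
  also have "\<dots> \<le> real (card (S - T)) * (x + 2 * \<rho>) - real (card (T - S)) * x"
  proof (rule diff_mono)
    show "sum f (S - T) \<le> real (card (S - T)) * (x + 2 * \<rho>)"
      using x by (intro sum_bounded_above) auto
    show "real (card (T - S)) * x \<le> sum f (T - S)"
      using x by (intro sum_bounded_below) auto
  qed
  also have "\<dots> = 2 * \<rho> * real (card (S - T))"
    using top_K_card_diff_eq[OF assms(1-3)] by (simp add: algebra_simps)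
  finally show ?thesis .
qed

lemma card_le_interval_bound:
  assumes "finite U" and W: "W \<subseteq> U"
    and range: "\<forall>u\<in>U. 0 \<le> f u \<and> f u \<le> 1"
    and in_interval: "\<forall>u\<in>W. x \<le> f u \<and> f u \<le> x + 2 * \<rho>"
    and ib: "interval_bound U f \<rho> c" and "0 \<le> \<rho>" "2 * \<rho> \<le> 1"
  shows "real (card W) \<le> 2 * c * \<rho> * real (card U)"
proof (cases "U = {}")
  case True
  then show ?thesis using W by simp
next
  case False
  define a where "a = min (max x 0) (1 - 2 * \<rho>)"
  have "W \<subseteq> {u \<in> U. f u \<in> {a..a + 2 * \<rho>}}"
  proof
    fix u assume "u \<in> W"
    then have "u \<in> U" "x \<le> f u" "f u \<le> x + 2 * \<rho>" "0 \<le> f u" "f u \<le> 1"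
      using W range in_interval by auto
    then show "u \<in> {u \<in> U. f u \<in> {a..a + 2 * \<rho>}}" unfolding a_def by auto
  qed
  then have "real (card W) \<le> real (card {u \<in> U. f u \<in> {a..a + 2 * \<rho>}})"
    using \<open>finite U\<close> by (simp add: card_mono)
  also have "\<dots> = Pr_tau U f {a..a + 2 * \<rho>} * real (card U)"
    using False \<open>finite U\<close> unfolding Pr_tau_def by simp
  also have "\<dots> \<le> c * (2 * \<rho>) * real (card U)"
    using ib[unfolded interval_bound_def, rule_format, of a "a + 2 * \<rho>"] assms(6,7)
    unfolding a_def by (intro mult_right_mono) auto
  finally show ?thesis by simp
qed

lemma top_K_value_loss_le:
  assumes "finite U" and S: "is_top_K f U K S" and T: "is_top_K g U K T"
    and range: "\<forall>u\<in>U. 0 \<le> f u \<and> f u \<le> 1"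
    and acc: "\<forall>w\<in>U. \<bar>g w - f w\<bar> \<le> \<rho>"
    and ib: "interval_bound U f \<rho> c" and "0 \<le> \<rho>" "2 * \<rho> \<le> 1"
  shows "sum f S - sum f T \<le> 2 * c * real (card U) * \<rho>\<^sup>2"
proof -
  obtain x where x: "\<forall>u \<in> (S - T) \<union> (T - S). x \<le> f u \<and> f u \<le> x + 2 * \<rho>"
    using top_K_symdiff_in_interval[OF \<open>finite U\<close> S T acc] .
  have symdiff_sub: "(S - T) \<union> (T - S) \<subseteq> U" using S T unfolding is_top_K_def by auto
  moreover have "card ((S - T) \<union> (T - S)) = 2 * card (S - T)"
  proof -
    have "finite (S - T)" "finite (T - S)"
      using finite_subset[OF symdiff_sub \<open>finite U\<close>] by auto
    moreover have "(S - T) \<inter> (T - S) = {}" by blast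
    ultimately have "card ((S - T) \<union> (T - S)) = card (S - T) + card (T - S)"
      by (rule card_Un_disjoint)
    with top_K_card_diff_eq[OF \<open>finite U\<close> S T] show ?thesis by simp
  qed
  ultimately have "2 * real (card (S - T)) \<le> 2 * c * \<rho> * real (card U)"
    using card_le_interval_bound[OF \<open>finite U\<close> symdiff_sub range x ib assms(7,8)] by simp
  from mult_left_mono[OF this \<open>0 \<le> \<rho>\<close>]
  have "2 * \<rho> * real (card (S - T)) \<le> 2 * c * real (card U) * \<rho>\<^sup>2"
    by (simp add: power2_eq_square algebra_simps)
  with top_K_sum_diff_le[OF \<open>finite U\<close> S T acc] show ?thesis by linarith
qed

lemma interval_bound_radius_pos:
  assumes "finite U" "u \<in> U" "0 \<le> f u" "f u \<le> 1" and ib: "interval_bound U f \<rho> c"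
  shows "0 < \<rho>"
proof (rule ccontr)
  assume "\<not> 0 < \<rho>"
  then have "Pr_tau U f {f u..f u} \<le> 0"
    using ib assms(3,4) unfolding interval_bound_def by fastforce
  moreover have "u \<in> {w \<in> U. f w \<in> {f u..f u}}" using \<open>u \<in> U\<close> by simp
  then have "0 < card {w \<in> U. f w \<in> {f u..f u}}" "0 < card U"
    using \<open>finite U\<close> card_gt_0_iff by fastforce+
  ultimately show False unfolding Pr_tau_def by (simp add: divide_le_0_iff)
qed

text \<open>If \<open>2\<rho> > 1\<close> no interval qualifies and every constant is admissible,
  so there is no least one.\<close>
lemma least_interval_bound_radius_le:
  assumes "\<And>c'. interval_bound U f \<rho> c' \<Longrightarrow> c \<le> c'"
  shows "2 * \<rho> \<le> 1"
proof (rule ccontr)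
  assume "\<not> 2 * \<rho> \<le> 1"
  then have "interval_bound U f \<rho> (c - 1)" unfolding interval_bound_def by auto
  with assms show False by fastforce
qed

lemma interval_bound_ge_one:
  assumes "finite U" "U \<noteq> {}" and range: "\<forall>u\<in>U. 0 \<le> f u \<and> f u \<le> 1"
    and ib: "interval_bound U f \<rho> c" and "2 * \<rho> \<le> 1"
  shows "1 \<le> c"
proof -
  have "Pr_tau U f {0..1} \<le> c"
    using ib \<open>2 * \<rho> \<le> 1\<close> unfolding interval_bound_def
    by (metis diff_zero mult_1_right order_refl zero_le_one)
  moreover have "{u \<in> U. f u \<in> {0..1}} = U" using range by auto
  ultimately show ?thesis using assms(1,2) unfolding Pr_tau_def by simp
qed

lemma (in prob_space) prob_all_ge_union_bound:
  assumes "finite I" and events: "\<And>i. i \<in> I \<Longrightarrow> {x \<in> space M. Q i x} \<in> events"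
    and bound: "\<And>i. i \<in> I \<Longrightarrow> 1 - p i \<le> prob {x \<in> space M. Q i x}"
  shows "1 - sum p I \<le> prob {x \<in> space M. \<forall>i\<in>I. Q i x}"
proof -
  have all: "{x \<in> space M. \<forall>i\<in>I. Q i x} \<in> events"
    using assms by (intro sets.sets_Collect_finite_All)
  have "1 - prob {x \<in> space M. \<forall>i\<in>I. Q i x} = prob (space M - {x \<in> space M. \<forall>i\<in>I. Q i x})"
    using prob_compl[OF all] by simp
  also have "\<dots> = prob (\<Union>i\<in>I. space M - {x \<in> space M. Q i x})"
    by (rule arg_cong[where f = prob]) auto
  also have "\<dots> \<le> (\<Sum>i\<in>I. prob (space M - {x \<in> space M. Q i x}))"
    using events by (intro finite_measure_subadditive_finite[OF \<open>finite I\<close>]) auto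
  also have "\<dots> \<le> sum p I"
    using prob_compl events bound by (intro sum_mono) fastforce
  finally show ?thesis by simp
qed

lemma LEA_radius_loss_eq:
  assumes "\<rho> = sqrt (V / (8 * c * M)) * sqrt \<epsilon>" "0 < \<rho>" "0 < c * M" "0 < \<epsilon>"
  shows "2 * c * M * \<rho>\<^sup>2 = \<epsilon> * V / 4" "0 < V"
proof -
  have "0 < sqrt (V / (8 * c * M))"
    using assms(1,2,4) by (metis linorder_not_le mult_nonpos_nonneg real_sqrt_ge_zero less_imp_le)
  then have q: "0 < V / (8 * c * M)" by simp
  then show "0 < V" using assms(3)
    by (metis mult.assoc zero_less_divide_iff zero_less_mult_iff zero_less_numeral
        not_less_iff_gr_or_eq order.asym)
  have "\<rho>\<^sup>2 = V / (8 * c * M) * \<epsilon>"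
    using assms(1,4) q by (simp add: power_mult_distrib)
  moreover have "c \<noteq> 0" "M \<noteq> 0" using assms(3) by auto
  ultimately show "2 * c * M * \<rho>\<^sup>2 = \<epsilon> * V / 4" by (simp add: field_simps)
qed

lemma LEA_value_ge_if_accurate:
  assumes "finite U" "U \<noteq> {}" and range: "\<forall>u\<in>U. 0 \<le> \<tau> u \<and> \<tau> u \<le> 1"
    and Ustar: "is_top_K \<tau> U K Ustar" and S: "is_top_K \<tau>hat U K S"
    and c_min: "interval_bound U \<tau> \<rho> c" "\<And>c'. interval_bound U \<tau> \<rho> c' \<Longrightarrow> c \<le> c'"
    and rho: "\<rho> = sqrt (sum \<tau> Ustar / (8 * c * real (card U))) * sqrt \<epsilon>" and "0 < \<epsilon>"
    and acc: "\<forall>u\<in>U. \<bar>\<tau>hat u - \<tau> u\<bar> \<le> \<rho>"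
  shows "(1 - \<epsilon>) * sum \<tau> Ustar \<le> sum \<tau> S"
proof -
  obtain u where "u \<in> U" using \<open>U \<noteq> {}\<close> by blast
  then have \<rho>_pos: "0 < \<rho>"
    using interval_bound_radius_pos[OF \<open>finite U\<close> _ _ _ c_min(1)] range by blast
  have \<rho>_le: "2 * \<rho> \<le> 1" by (rule least_interval_bound_radius_le[OF c_min(2)])
  have "1 \<le> c" by (rule interval_bound_ge_one[OF assms(1,2) range c_min(1) \<rho>_le])
  moreover have "0 < card U" using assms(1,2) by (simp add: card_gt_0_iff)
  ultimately have "0 < c * real (card U)" by simp
  note loss_eq = LEA_radius_loss_eq[OF rho \<rho>_pos this \<open>0 < \<epsilon>\<close>]
  have "sum \<tau> Ustar - sum \<tau> S \<le> 2 * c * real (card U) * \<rho>\<^sup>2"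
    using top_K_value_loss_le[OF \<open>finite U\<close> Ustar S range acc c_min(1) _ \<rho>_le] \<rho>_pos by simp
  also have "\<dots> = \<epsilon> * sum \<tau> Ustar / 4" by (rule loss_eq(1))
  also have "\<dots> \<le> \<epsilon> * sum \<tau> Ustar" using \<open>0 < \<epsilon>\<close> loss_eq(2) by simp
  finally show ?thesis by (simp add: algebra_simps)
qed

theorem theorem4:
  fixes U :: "'u set" and \<tau> :: "'u \<Rightarrow> real" and M K :: nat
    and \<epsilon> \<delta> \<gamma> \<rho> c V C :: real and Ustar :: "'u set"
    and P :: "'w measure" and \<tau>hat :: "'u \<Rightarrow> 'w \<Rightarrow> real"
    and alloc :: "'w \<Rightarrow> 'u set" and samples :: "'u \<Rightarrow> 'w \<Rightarrow> nat"
  assumes finU: "finite U" and cardU: "card U = M"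
    and tau_range: "\<forall>u\<in>U. 0 \<le> \<tau> u \<and> \<tau> u \<le> 1"
    and tau_distinct: "inj_on \<tau> U"
    and K: "1 \<le> K" "K \<le> M"
    and eps: "\<epsilon> > 0" and del: "\<delta> > 0"
    and Ustar: "is_top_K \<tau> U K Ustar" and V_def: "V = (\<Sum>u\<in>Ustar. \<tau> u)"
    and c_min: "interval_bound U \<tau> \<rho> c"
               "\<And>c'. interval_bound U \<tau> \<rho> c' \<Longrightarrow> c \<le> c'"
    and gamma: "\<gamma> = sqrt (V / (8 * c * real M))"
    and rho: "\<rho> = \<gamma> * sqrt \<epsilon>"
    and P: "prob_space P"
    and est_meas: "\<forall>u\<in>U. \<tau>hat u \<in> borel_measurable P"
    and oracle_acc: "\<forall>u\<in>U. measure P {\<omega> \<in> space P. \<bar>\<tau>hat u \<omega> - \<tau> u\<bar> \<le> \<rho>} \<ge> 1 - \<delta> / real M"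
    and oracle_cost: "\<forall>u\<in>U. \<forall>\<omega>\<in>space P.
                         real (samples u \<omega>) \<le> C * ln (2 / (\<delta> / real M)) / \<rho>\<^sup>2"
    and lea_output: "\<forall>\<omega>\<in>space P. is_top_K (\<lambda>u. \<tau>hat u \<omega>) U K (alloc \<omega>)"
  shows "(\<exists>E \<in> sets P. measure P E \<ge> 1 - \<delta> \<and>
            (\<forall>\<omega>\<in>E. (\<Sum>u\<in>alloc \<omega>. \<tau> u) \<ge> (1 - \<epsilon>) * V))
         \<and> (\<forall>\<omega>\<in>space P. real (\<Sum>u\<in>U. samples u \<omega>) \<le> C * real M * ln (2 * real M / \<delta>) / \<rho>\<^sup>2)"
proof -
  interpret prob_space P by (rule P)
  define E where "E = {\<omega> \<in> space P. \<forall>u\<in>U. \<bar>\<tau>hat u \<omega> - \<tau> u\<bar> \<le> \<rho>}"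
  have events: "{\<omega> \<in> space P. \<bar>\<tau>hat u \<omega> - \<tau> u\<bar> \<le> \<rho>} \<in> events" if "u \<in> U" for u
  proof -
    have "\<tau>hat u \<in> borel_measurable P" using est_meas that by blast
    then show ?thesis by measurable
  qed
  then have "E \<in> events" unfolding E_def by (intro sets.sets_Collect_finite_All finU)
  moreover have "1 - \<delta> \<le> prob E"
    using prob_all_ge_union_bound[of U "\<lambda>u \<omega>. \<bar>\<tau>hat u \<omega> - \<tau> u\<bar> \<le> \<rho>" "\<lambda>_. \<delta> / real M"]
      finU events oracle_acc cardU K unfolding E_def by simp
  moreover have "(1 - \<epsilon>) * V \<le> (\<Sum>u\<in>alloc \<omega>. \<tau> u)" if "\<omega> \<in> E" for \<omega>
  proof -
    have "U \<noteq> {}" using K cardU by auto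
    moreover have "\<rho> = sqrt (sum \<tau> Ustar / (8 * c * real (card U))) * sqrt \<epsilon>"
      using rho gamma V_def cardU by simp
    moreover have "\<omega> \<in> space P" "\<forall>u\<in>U. \<bar>\<tau>hat u \<omega> - \<tau> u\<bar> \<le> \<rho>" using that unfolding E_def by auto
    ultimately show ?thesis
      using LEA_value_ge_if_accurate[OF finU _ tau_range Ustar _ c_min _ eps] lea_output V_def by blast
  qed
  moreover have "real (\<Sum>u\<in>U. samples u \<omega>) \<le> C * real M * ln (2 * real M / \<delta>) / \<rho>\<^sup>2"
    if "\<omega> \<in> space P" for \<omega>
  proof -
    have "real (\<Sum>u\<in>U. samples u \<omega>) \<le> real (card U) * (C * ln (2 / (\<delta> / real M)) / \<rho>\<^sup>2)"
      unfolding of_nat_sum using oracle_cost that by (intro sum_bounded_above) auto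
    then show ?thesis using cardU by (simp add: mult.assoc mult.left_commute)
  qed
  ultimately show ?thesis by blast
qed

end
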